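(* Let $Q,R\subseteq\mathcal{P}$, and define $\mu=TM(\xi_Q)\cdot TM(\xi_R)$ and $\nu=\gcd\!\left(\dfrac{\xi_Q}{TM(\xi_Q)},\dfrac{\xi_R}{TM(\xi_R)}\right)$. Then $\xi_{Q\cup R}=\mu\cdot\nu$.
   Context: $\mathcal{P}=\{P_1,\ldots,P_n\}$; $\varphi:2^{\mathcal{P}}\to\mathbb{F}_2^n$ sends a set to its indicator vector; for $S\subseteq\mathcal{P}$, $\xi_S(Y_1,\ldots,Y_n)=\prod_{i=1}^n(1+Y_i+\varphi(S)_i)$, i.e. $\xi_S=\prod_{i:P_i\in S}Y_i\cdot\prod_{i:P_i\notin S}(1+Y_i)$. $TM(f)$ is the smallest monomial of $f$ in the lexicographic order with $Y_n\prec\cdots\prec Y_1$. The quotient $\xi_S/TM(\xi_S)$ is the polynomial $\prod_{i:P_i\notin S}(1+Y_i)$; the gcd is taken in $\mathbb{F}_2[Y_1,\ldots,Y_n]$; products and the equality are in the Boolean polynomial ring $\mathbb{F}_2[\bar Y]/\langle Y_i^2-Y_i\rangle$. *)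

theory Defs
  imports "HOL-Library.Poly_Mapping" "HOL-Library.Z2"
begin

text \<open>Polynomials over F_2 in the variables Y_i (i :: nat), represented as finitely supported
  maps from monomials (exponent vectors) to coefficients in bit = F_2.
  The ring F_2[Y_1,...,Y_n] is the subring of polynomials whose variables lie in {1..n}.\<close>

type_synonym bpoly = "(nat \<Rightarrow>\<^sub>0 nat) \<Rightarrow>\<^sub>0 bit"

definition Yvar :: "nat \<Rightarrow> bpoly" where
  "Yvar i = Poly_Mapping.single (Poly_Mapping.single i 1) 1"

definition vars :: "bpoly \<Rightarrow> nat set" where
  "vars f = (\<Union>m\<in>Poly_Mapping.keys (f::bpoly). Poly_Mapping.keys (m :: nat \<Rightarrow>\<^sub>0 nat))"

definition poly_in :: "nat \<Rightarrow> bpoly \<Rightarrow> bool" where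
  "poly_in n f \<longleftrightarrow> vars f \<subseteq> {1..n}"

definition xi :: "nat \<Rightarrow> nat set \<Rightarrow> bpoly" where
  "xi n S = (\<Prod>i\<in>{1..n}. 1 + Yvar i + (if i \<in> S then 1 else 0))"

text \<open>Lexicographic order on monomials with Y_n < ... < Y_1.\<close>
definition lex_less :: "(nat \<Rightarrow>\<^sub>0 nat) \<Rightarrow> (nat \<Rightarrow>\<^sub>0 nat) \<Rightarrow> bool" where
  "lex_less a b \<longleftrightarrow> (\<exists>i. (\<forall>j<i. Poly_Mapping.lookup a j = Poly_Mapping.lookup b j) \<and> Poly_Mapping.lookup a i < Poly_Mapping.lookup b i)"

definition TM :: "bpoly \<Rightarrow> bpoly" where
  "TM f = Poly_Mapping.single
     (THE m. m \<in> Poly_Mapping.keys f \<and> (\<forall>m'\<in>Poly_Mapping.keys f. m' \<noteq> m \<longrightarrow> lex_less m m')) 1"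

definition pquot :: "bpoly \<Rightarrow> bpoly \<Rightarrow> bpoly" where
  "pquot f g = (THE q. f = g * q)"

text \<open>Divisibility and gcd in F_2[Y_1,...,Y_n] (units of F_2[Y] are just 1, so gcd is unique).\<close>
definition dvd_in :: "nat \<Rightarrow> bpoly \<Rightarrow> bpoly \<Rightarrow> bool" where
  "dvd_in n d a \<longleftrightarrow> (\<exists>c. poly_in n c \<and> a = d * c)"

definition is_gcd :: "nat \<Rightarrow> bpoly \<Rightarrow> bpoly \<Rightarrow> bpoly \<Rightarrow> bool" where
  "is_gcd n a b g \<longleftrightarrow> poly_in n g \<and> dvd_in n g a \<and> dvd_in n g b \<and>
     (\<forall>d. poly_in n d \<and> dvd_in n d a \<and> dvd_in n d b \<longrightarrow> dvd_in n d g)"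

text \<open>Equality in the Boolean polynomial ring F_2[Y_1..Y_n] / <Y_i^2 - Y_i>.\<close>
definition bool_eq :: "nat \<Rightarrow> bpoly \<Rightarrow> bpoly \<Rightarrow> bool" where
  "bool_eq n f g \<longleftrightarrow> (\<exists>h. (\<forall>i\<in>{1..n}. poly_in n (h i)) \<and>
     f - g = (\<Sum>i\<in>{1..n}. h i * (Yvar i ^ 2 - Yvar i)))"

end

theory Submission
  imports Defs "HOL-Computational_Algebra.Factorial_Ring"
begin

text \<open>
  Write Y^S for the product of the Y_i with i in S, L(A) for the product of the 1 + Y_i with
  i in A, and S' for the complement {1..n} - S. Over F_2 we have xi_S = Y^S L(S'), whose
  monomials are the Y^S Y^T with T a subset of S'. All of them are divisible by Y^S, so
  TM(xi_S) = Y^S and the quotient xi_S / TM(xi_S) is L(S').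

  Substituting Y_a := 1 is a ring homomorphism whose kernel is generated by 1 + Y_a, so
  1 + Y_a is a prime element, and it divides L(A) only if a is in A. Since 1 is the only unit
  (compare leading monomials), the divisors of L(A) are exactly the L(A') with A' a subset
  of A. Hence L(Q' \<inter> R') = L((Q \<union> R)') is the unique gcd.

  Finally, with I = Q \<inter> R, the product TM(xi_Q) TM(xi_R) L((Q \<union> R)') equals
  Y^(Q \<union> R) Y^I L((Q \<union> R)'), which differs from xi_(Q \<union> R) = Y^(Q \<union> R) L((Q \<union> R)') by a
  multiple of (Y^I)^2 - Y^I, an element of the ideal generated by the Y_i^2 - Y_i.
\<close>

lemma poly_mapping_sum_single:
  "f = (\<Sum>m\<in>Poly_Mapping.keys f. Poly_Mapping.single m (Poly_Mapping.lookup f m))"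
  by (rule poly_mapping_eqI) (simp add: lookup_sum lookup_single when_def in_keys_iff)

lemma lookup_single_mult:
  fixes m k :: "'a::cancel_comm_monoid_add" and g :: "'a \<Rightarrow>\<^sub>0 'b::semiring_0"
  shows "Poly_Mapping.lookup (Poly_Mapping.single m c * g) (m + k) = c * Poly_Mapping.lookup g k"
proof -
  have "Poly_Mapping.single m c * g
      = (\<Sum>q\<in>Poly_Mapping.keys g. Poly_Mapping.single (m + q) (c * Poly_Mapping.lookup g q))"
    by (subst poly_mapping_sum_single[of g]) (simp add: sum_distrib_left mult_single)
  then show ?thesis
    by (simp add: lookup_sum lookup_single when_def in_keys_iff)
qed

lemma prod_single_one:
  "finite K \<Longrightarrow> (\<Prod>k\<in>K. Poly_Mapping.single (g k) (1::'b::comm_semiring_1)) = Poly_Mapping.single (\<Sum>k\<in>K. g k) 1"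
  by (induction K rule: finite_induct) (simp_all add: mult_single)

lemma poly_mapping_bit_add_self [simp]: "(f :: 'a \<Rightarrow>\<^sub>0 bit) + f = 0"
  by (rule poly_mapping_eqI) (simp add: lookup_add)

lemma poly_mapping_bit_add_add_self: "(f :: 'a \<Rightarrow>\<^sub>0 bit) + g + f = g"
proof -
  have "f + g + f = g + (f + f)"
    by (simp only: add.commute add.left_commute)
  then show ?thesis
    by simp
qed

lemma poly_mapping_bit_diff_eq_add: "(f :: 'a \<Rightarrow>\<^sub>0 bit) - g = f + g"
  by (metis diff_conv_add_uminus neg_eq_iff_add_eq_0 poly_mapping_bit_add_self)

section \<open>Substituting polynomials for variables\<close>

definition monom_subst :: "('v \<Rightarrow> 'r) \<Rightarrow> ('v \<Rightarrow>\<^sub>0 nat) \<Rightarrow> 'r::comm_monoid_mult" where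
  "monom_subst \<sigma> m = (\<Prod>k\<in>Poly_Mapping.keys m. \<sigma> k ^ Poly_Mapping.lookup m k)"

definition poly_subst ::
  "('v \<Rightarrow> ('v \<Rightarrow>\<^sub>0 nat) \<Rightarrow>\<^sub>0 'c) \<Rightarrow> (('v \<Rightarrow>\<^sub>0 nat) \<Rightarrow>\<^sub>0 'c::comm_semiring_1) \<Rightarrow> ('v \<Rightarrow>\<^sub>0 nat) \<Rightarrow>\<^sub>0 'c"
  where "poly_subst \<sigma> f =
    (\<Sum>m\<in>Poly_Mapping.keys f. Poly_Mapping.single 0 (Poly_Mapping.lookup f m) * monom_subst \<sigma> m)"

lemma monom_subst_superset:
  assumes "finite S" "Poly_Mapping.keys m \<subseteq> S"
  shows "monom_subst \<sigma> m = (\<Prod>k\<in>S. \<sigma> k ^ Poly_Mapping.lookup m k)"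
  unfolding monom_subst_def
  by (rule prod.mono_neutral_left) (use assms in \<open>auto simp: in_keys_iff\<close>)

lemma monom_subst_0 [simp]: "monom_subst \<sigma> 0 = 1"
  by (simp add: monom_subst_def)

lemma monom_subst_add: "monom_subst \<sigma> (m + m') = monom_subst \<sigma> m * monom_subst \<sigma> m'"
proof -
  let ?S = "Poly_Mapping.keys m \<union> Poly_Mapping.keys m'"
  have "monom_subst \<sigma> (m + m') = (\<Prod>k\<in>?S. \<sigma> k ^ Poly_Mapping.lookup m k * \<sigma> k ^ Poly_Mapping.lookup m' k)"
    by (subst monom_subst_superset[of ?S]) (auto simp: keys_add lookup_add power_add)
  also have "\<dots> = monom_subst \<sigma> m * monom_subst \<sigma> m'"
    by (simp add: prod.distrib monom_subst_superset[of ?S])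
  finally show ?thesis .
qed

lemma poly_subst_superset:
  assumes "finite S" "Poly_Mapping.keys f \<subseteq> S"
  shows "poly_subst \<sigma> f = (\<Sum>m\<in>S. Poly_Mapping.single 0 (Poly_Mapping.lookup f m) * monom_subst \<sigma> m)"
  unfolding poly_subst_def
  by (rule sum.mono_neutral_left) (use assms in \<open>auto simp: in_keys_iff\<close>)

lemma poly_subst_0 [simp]: "poly_subst \<sigma> 0 = 0"
  by (simp add: poly_subst_def)

lemma poly_subst_single: "poly_subst \<sigma> (Poly_Mapping.single m c) = Poly_Mapping.single 0 c * monom_subst \<sigma> m"
  by (cases "c = 0") (simp_all add: poly_subst_def)

lemma poly_subst_1 [simp]: "poly_subst \<sigma> 1 = 1"
  using poly_subst_single[of \<sigma> 0 1] by simp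

lemma poly_subst_add: "poly_subst \<sigma> (f + g) = poly_subst \<sigma> f + poly_subst \<sigma> g"
proof -
  let ?S = "Poly_Mapping.keys f \<union> Poly_Mapping.keys g"
  show ?thesis
    by (simp add: poly_subst_superset[of ?S] keys_add lookup_add single_add
        distrib_right sum.distrib)
qed

lemma poly_subst_sum: "poly_subst \<sigma> (sum F A) = (\<Sum>a\<in>A. poly_subst \<sigma> (F a))"
  by (induction A rule: infinite_finite_induct) (simp_all add: poly_subst_add)

lemma poly_subst_mult: "poly_subst \<sigma> (f * g) = poly_subst \<sigma> f * poly_subst \<sigma> g"
proof -
  let ?F = "Poly_Mapping.keys f" and ?G = "Poly_Mapping.keys g"
  let ?f = "\<lambda>a. Poly_Mapping.single a (Poly_Mapping.lookup f a)"
  let ?g = "\<lambda>b. Poly_Mapping.single b (Poly_Mapping.lookup g b)"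
  have monomials: "poly_subst \<sigma> (?f a * ?g b) = poly_subst \<sigma> (?f a) * poly_subst \<sigma> (?g b)" for a b
    by (simp add: mult_single poly_subst_single monom_subst_add ac_simps)
  have "poly_subst \<sigma> (f * g) = poly_subst \<sigma> ((\<Sum>a\<in>?F. ?f a) * (\<Sum>b\<in>?G. ?g b))"
    by (simp flip: poly_mapping_sum_single)
  also have "\<dots> = (\<Sum>a\<in>?F. \<Sum>b\<in>?G. poly_subst \<sigma> (?f a) * poly_subst \<sigma> (?g b))"
    by (simp add: sum_product poly_subst_sum monomials)
  also have "\<dots> = poly_subst \<sigma> (\<Sum>a\<in>?F. ?f a) * poly_subst \<sigma> (\<Sum>b\<in>?G. ?g b)"
    by (simp add: sum_product poly_subst_sum)
  finally show ?thesis
    by (simp flip: poly_mapping_sum_single)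
qed

lemma poly_subst_prod: "poly_subst \<sigma> (prod F A) = (\<Prod>a\<in>A. poly_subst \<sigma> (F a))"
  by (induction A rule: infinite_finite_induct) (simp_all add: poly_subst_mult)

lemma dvd_prod_diff_prod:
  fixes a b :: "_ \<Rightarrow> 'a::comm_ring_1"
  assumes "\<And>k. k \<in> K \<Longrightarrow> p dvd a k - b k"
  shows "p dvd (\<Prod>k\<in>K. a k) - (\<Prod>k\<in>K. b k)"
  using assms
proof (induction K rule: infinite_finite_induct)
  case (insert k K)
  have "a k * prod a K - b k * prod b K = a k * (prod a K - prod b K) + (a k - b k) * prod b K"
    by (simp add: algebra_simps)
  with insert show ?case
    by simp
qed simp_all

lemma dvd_poly_subst_diff:
  fixes \<sigma> \<tau> :: "_ \<Rightarrow> _ \<Rightarrow>\<^sub>0 'c::comm_ring_1"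
  assumes "\<And>k. p dvd \<sigma> k - \<tau> k"
  shows "p dvd poly_subst \<sigma> f - poly_subst \<tau> f"
proof -
  have "poly_subst \<sigma> f - poly_subst \<tau> f = (\<Sum>m\<in>Poly_Mapping.keys f.
      Poly_Mapping.single 0 (Poly_Mapping.lookup f m) * (monom_subst \<sigma> m - monom_subst \<tau> m))"
    by (simp add: poly_subst_def sum_subtractf right_diff_distrib)
  also have "p dvd \<dots>"
    unfolding monom_subst_def
    using assms by (intro dvd_sum dvd_mult dvd_prod_diff_prod) (metis dvd_mult2 power_diff_sumr2)
  finally show ?thesis .
qed

lemma poly_subst_zero:
  fixes f :: "('v \<Rightarrow>\<^sub>0 nat) \<Rightarrow>\<^sub>0 'c::comm_semiring_1"
  shows "poly_subst (\<lambda>_. 0) f = Poly_Mapping.single 0 (Poly_Mapping.lookup f 0)"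
proof -
  let ?S = "insert 0 (Poly_Mapping.keys f)"
  have monom: "monom_subst (\<lambda>_. 0 :: ('v \<Rightarrow>\<^sub>0 nat) \<Rightarrow>\<^sub>0 'c) m = 0" if "m \<noteq> 0" for m
  proof -
    obtain k where "k \<in> Poly_Mapping.keys m"
      using \<open>m \<noteq> 0\<close> keys_eq_empty by blast
    then show ?thesis
      unfolding monom_subst_def by (intro prod_zero bexI[of _ k]) (auto simp: in_keys_iff zero_power)
  qed
  have "poly_subst (\<lambda>_. 0) f = (\<Sum>m\<in>?S. Poly_Mapping.single 0 (Poly_Mapping.lookup f m) * monom_subst (\<lambda>_. 0) m)"
    by (rule poly_subst_superset) auto
  also have "\<dots> = (\<Sum>m\<in>?S. if m = 0 then Poly_Mapping.single 0 (Poly_Mapping.lookup f m) else 0)"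
    by (rule sum.cong) (simp_all add: monom)
  finally show ?thesis
    by simp
qed

lemma Yvar_power: "Yvar k ^ e = Poly_Mapping.single (Poly_Mapping.single k e) 1"
  by (induction e) (simp_all add: Yvar_def mult_single add.commute flip: single_add)

lemma poly_subst_Yvar [simp]: "poly_subst \<sigma> (Yvar i) = \<sigma> i"
  by (simp add: Yvar_def poly_subst_single monom_subst_def)

lemma poly_subst_Yvar_id [simp]: "poly_subst Yvar f = f"
proof -
  have monom: "monom_subst Yvar m = Poly_Mapping.single m 1" for m
    using poly_mapping_sum_single[of m]
    by (simp add: monom_subst_def Yvar_power prod_single_one)
  have "poly_subst Yvar f = (\<Sum>m\<in>Poly_Mapping.keys f. Poly_Mapping.single m (Poly_Mapping.lookup f m))"
    by (simp only: poly_subst_def monom mult_single add_0 mult_1_right)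
  then show ?thesis
    by (simp flip: poly_mapping_sum_single)
qed

section \<open>Units\<close>

lemma zero_le_poly_mapping_nat: "(0 :: 'a::linorder \<Rightarrow>\<^sub>0 nat) \<le> m"
proof -
  have "\<not> m < 0"
    by transfer (simp add: less_fun_def)
  then show ?thesis
    by simp
qed

lemma lookup_mult_Max_keys:
  fixes f g :: "'a::{ordered_cancel_comm_monoid_add, linorder} \<Rightarrow>\<^sub>0 'b::comm_semiring_0"
  assumes "f \<noteq> 0" "g \<noteq> 0"
  defines "a \<equiv> Max (Poly_Mapping.keys f)" and "b \<equiv> Max (Poly_Mapping.keys g)"
  shows "Poly_Mapping.lookup (f * g) (a + b) = Poly_Mapping.lookup f a * Poly_Mapping.lookup g b"
proof -
  let ?F = "Poly_Mapping.keys f" and ?G = "Poly_Mapping.keys g"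
  let ?h = "\<lambda>(x, y). Poly_Mapping.lookup f x * Poly_Mapping.lookup g y when x + y = a + b"
  have max: "a \<in> ?F" "b \<in> ?G" "x \<in> ?F \<Longrightarrow> x \<le> a" "y \<in> ?G \<Longrightarrow> y \<le> b" for x y
    using assms by (simp_all add: a_def b_def)
  have only_max: "x + y < a + b" if "x \<in> ?F" "y \<in> ?G" "(x, y) \<noteq> (a, b)" for x y
    using that max(3)[OF that(1)] max(4)[OF that(2)]
    by (metis add_le_less_mono add_less_le_mono order_le_neq_trans)
  have "f * g = (\<Sum>(x, y)\<in>?F \<times> ?G. Poly_Mapping.single (x + y) (Poly_Mapping.lookup f x * Poly_Mapping.lookup g y))"
    by (subst poly_mapping_sum_single[of f], subst poly_mapping_sum_single[of g])
       (simp add: sum_product mult_single sum.cartesian_product)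
  then have "Poly_Mapping.lookup (f * g) (a + b) = (\<Sum>p\<in>?F \<times> ?G. ?h p)"
    by (simp add: lookup_sum lookup_single case_prod_beta)
  also have "\<dots> = (\<Sum>p\<in>{(a, b)}. ?h p)"
    using max(1,2) only_max by (intro sum.mono_neutral_right) fastforce+
  finally show ?thesis
    by simp
qed

text \<open>The maximum is taken in the library's linear order on monomials, which is compatible
  with addition and has 0 as least element.\<close>

lemma bit_poly_dvd_one_iff: "(f :: ('a::linorder \<Rightarrow>\<^sub>0 nat) \<Rightarrow>\<^sub>0 bit) dvd 1 \<longleftrightarrow> f = 1"
proof
  assume "f dvd 1"
  then obtain g where fg: "f * g = 1"
    by (metis dvdE)
  then have nonzero: "f \<noteq> 0" "g \<noteq> 0"
    by auto
  define a where "a = Max (Poly_Mapping.keys f)"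
  define b where "b = Max (Poly_Mapping.keys g)"
  have max_keys: "a \<in> Poly_Mapping.keys f" "b \<in> Poly_Mapping.keys g"
    using nonzero by (simp_all add: a_def b_def)
  then have lead: "Poly_Mapping.lookup f a = 1" "Poly_Mapping.lookup g b = 1"
    by (simp_all add: in_keys_iff)
  then have "Poly_Mapping.lookup (f * g) (a + b) = 1"
    using lookup_mult_Max_keys[OF nonzero] by (simp add: a_def b_def)
  then have "a + b = 0"
    by (simp add: fg lookup_one when_def split: if_splits)
  then have "a = 0"
    by (metis add_is_0 lookup_add lookup_zero poly_mapping_eqI)
  moreover have "m = 0" if "m \<in> Poly_Mapping.keys f" for m
    using Max_ge[OF finite_keys that] \<open>a = 0\<close> zero_le_poly_mapping_nat[of m]
    by (simp add: a_def)
  ultimately have "Poly_Mapping.keys f = {0}"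
    using max_keys by blast
  then show "f = 1"
    using poly_mapping_sum_single[of f] lead(1) \<open>a = 0\<close> by simp
qed simp

section \<open>Leading terms of the polynomials xi\<close>

definition Ymon :: "nat set \<Rightarrow> bpoly" where
  "Ymon S = (\<Prod>i\<in>S. Yvar i)"

definition lin_prod :: "nat set \<Rightarrow> bpoly" where
  "lin_prod A = (\<Prod>i\<in>A. 1 + Yvar i)"

lemma Yvar_nonzero [simp]: "Yvar i \<noteq> 0"
  by (metis Yvar_def lookup_single_eq lookup_zero zero_neq_one)

lemma Ymon_nonzero: "finite S \<Longrightarrow> Ymon S \<noteq> 0"
  by (simp add: Ymon_def)

lemma Ymon_eq_single: "finite S \<Longrightarrow> Ymon S = Poly_Mapping.single (\<Sum>i\<in>S. Poly_Mapping.single i 1) 1"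
  unfolding Ymon_def Yvar_def by (rule prod_single_one)

lemma lin_prod_insert: "finite A \<Longrightarrow> a \<notin> A \<Longrightarrow> lin_prod (insert a A) = (1 + Yvar a) * lin_prod A"
  by (simp add: lin_prod_def)

lemma xi_eq_Ymon_mult_lin_prod: "S \<subseteq> {1..n} \<Longrightarrow> xi n S = Ymon S * lin_prod ({1..n} - S)"
proof -
  let ?factor = "\<lambda>i. 1 + Yvar i + (if i \<in> S then 1 else 0)"
  assume "S \<subseteq> {1..n}"
  then have "xi n S = prod ?factor ({1..n} - S) * prod ?factor S"
    unfolding xi_def by (intro prod.subset_diff) auto
  also have "prod ?factor S = Ymon S"
    unfolding Ymon_def by (rule prod.cong) (simp_all add: poly_mapping_bit_add_add_self)
  also have "prod ?factor ({1..n} - S) = lin_prod ({1..n} - S)"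
    unfolding lin_prod_def by simp
  finally show ?thesis
    by (simp only: mult.commute)
qed

lemma lookup_lin_prod_0: "Poly_Mapping.lookup (lin_prod A) 0 = 1"
proof -
  have "poly_subst (\<lambda>_. 0) (lin_prod A) = 1"
    by (simp add: lin_prod_def poly_subst_prod poly_subst_add)
  then show ?thesis
    by (metis lookup_single_eq poly_subst_zero single_one)
qed

lemma lex_less_if_pointwise_le:
  assumes "\<And>j. Poly_Mapping.lookup a j \<le> Poly_Mapping.lookup b j" "a \<noteq> b"
  shows "lex_less a b"
proof -
  define i where "i = (LEAST i. Poly_Mapping.lookup a i \<noteq> Poly_Mapping.lookup b i)"
  have "\<exists>i. Poly_Mapping.lookup a i \<noteq> Poly_Mapping.lookup b i"
    using assms(2) by (meson poly_mapping_eqI)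
  then have "Poly_Mapping.lookup a i \<noteq> Poly_Mapping.lookup b i"
    unfolding i_def by (rule LeastI_ex)
  then have "Poly_Mapping.lookup a i < Poly_Mapping.lookup b i"
    using assms(1)[of i] by simp
  moreover have "\<forall>j<i. Poly_Mapping.lookup a j = Poly_Mapping.lookup b j"
    unfolding i_def using not_less_Least by blast
  ultimately show ?thesis
    unfolding lex_less_def by blast
qed

lemma TM_eq_pointwise_least_key:
  assumes "m \<in> Poly_Mapping.keys f"
    and "\<And>m' j. m' \<in> Poly_Mapping.keys f \<Longrightarrow> Poly_Mapping.lookup m j \<le> Poly_Mapping.lookup m' j"
  shows "TM f = Poly_Mapping.single m 1"
proof -
  have "(THE m. m \<in> Poly_Mapping.keys f \<and> (\<forall>m'\<in>Poly_Mapping.keys f. m' \<noteq> m \<longrightarrow> lex_less m m')) = m"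
  proof (rule the_equality)
    show "m \<in> Poly_Mapping.keys f \<and> (\<forall>m'\<in>Poly_Mapping.keys f. m' \<noteq> m \<longrightarrow> lex_less m m')"
      using assms by (blast intro: lex_less_if_pointwise_le)
  next
    fix m0 assume m0: "m0 \<in> Poly_Mapping.keys f \<and> (\<forall>m'\<in>Poly_Mapping.keys f. m' \<noteq> m0 \<longrightarrow> lex_less m0 m')"
    show "m0 = m"
    proof (rule ccontr)
      assume "m0 \<noteq> m"
      with m0 assms(1) have "lex_less m0 m"
        by metis
      then obtain i where "Poly_Mapping.lookup m0 i < Poly_Mapping.lookup m i"
        unfolding lex_less_def by blast
      with m0 assms(2)[of m0 i] show False
        by simp
    qed
  qed
  then show ?thesis
    by (simp add: TM_def)
qed

lemma TM_xi: assumes "S \<subseteq> {1..n}" shows "TM (xi n S) = Ymon S"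
proof -
  define m where "m = (\<Sum>i\<in>S. Poly_Mapping.single i (1::nat))"
  have "finite S"
    using assms finite_subset by blast
  then have xi: "xi n S = Poly_Mapping.single m 1 * lin_prod ({1..n} - S)"
    using xi_eq_Ymon_mult_lin_prod[OF assms] by (simp add: Ymon_eq_single m_def)
  have "Poly_Mapping.lookup (xi n S) (m + 0) = 1"
    unfolding xi lookup_single_mult by (simp add: lookup_lin_prod_0)
  then have "m \<in> Poly_Mapping.keys (xi n S)"
    by (simp add: in_keys_iff)
  moreover have "Poly_Mapping.lookup m j \<le> Poly_Mapping.lookup m' j" if "m' \<in> Poly_Mapping.keys (xi n S)" for m' j
    using that keys_mult[of "Poly_Mapping.single m 1" "lin_prod ({1..n} - S)"]
    by (auto simp: xi lookup_add)
  ultimately show ?thesis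
    using \<open>finite S\<close> by (simp add: TM_eq_pointwise_least_key Ymon_eq_single m_def)
qed

lemma pquot_mult_cancel: "(a::bpoly) \<noteq> 0 \<Longrightarrow> pquot (a * b) a = b"
  unfolding pquot_def by (rule the_equality) simp_all

lemma pquot_xi_TM: assumes "S \<subseteq> {1..n}" shows "pquot (xi n S) (TM (xi n S)) = lin_prod ({1..n} - S)"
proof -
  have "finite S"
    using assms finite_subset by blast
  then show ?thesis
    unfolding TM_xi[OF assms] unfolding xi_eq_Ymon_mult_lin_prod[OF assms]
    by (simp add: pquot_mult_cancel Ymon_nonzero)
qed

section \<open>Divisors of products of linear factors\<close>

lemma one_plus_Yvar_nonzero: "1 + Yvar a \<noteq> 0"
proof
  assume "1 + Yvar a = 0"
  then have "poly_subst (\<lambda>_. 0) (1 + Yvar a) = 0"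
    by simp
  then show False
    by (simp add: poly_subst_add)
qed

lemma lin_prod_nonzero: "finite A \<Longrightarrow> lin_prod A \<noteq> 0"
  by (simp add: lin_prod_def one_plus_Yvar_nonzero)

lemma poly_subst_one_one_plus_Yvar [simp]: "poly_subst (Yvar(a := 1)) (1 + Yvar a) = 0"
  by (simp add: poly_subst_add)

lemma one_plus_Yvar_dvd_if_subst_eq_0:
  assumes "poly_subst (Yvar(a := 1)) f = 0"
  shows "(1 + Yvar a) dvd f"
proof -
  have "(1 + Yvar a) dvd poly_subst Yvar f - poly_subst (Yvar(a := 1)) f"
    by (rule dvd_poly_subst_diff) (simp add: poly_mapping_bit_diff_eq_add add.commute)
  with assms show ?thesis
    by simp
qed

lemma poly_subst_one_lin_prod: "a \<notin> A \<Longrightarrow> poly_subst (Yvar(a := 1)) (lin_prod A) = lin_prod A"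
  unfolding lin_prod_def poly_subst_prod by (intro prod.cong) (auto simp: poly_subst_add)

lemma prime_elem_one_plus_Yvar: "prime_elem (1 + Yvar a)"
proof (rule prime_elemI)
  show "1 + Yvar a \<noteq> 0"
    by (rule one_plus_Yvar_nonzero)
  show "\<not> (1 + Yvar a) dvd 1"
    by (simp add: bit_poly_dvd_one_iff)
next
  fix f g
  assume "(1 + Yvar a) dvd f * g"
  then obtain c where "f * g = (1 + Yvar a) * c"
    by (elim dvdE)
  then have "poly_subst (Yvar(a := 1)) f * poly_subst (Yvar(a := 1)) g = 0"
    by (metis poly_subst_mult poly_subst_one_one_plus_Yvar mult_zero_left)
  then show "(1 + Yvar a) dvd f \<or> (1 + Yvar a) dvd g"
    by (auto intro: one_plus_Yvar_dvd_if_subst_eq_0)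
qed

lemma one_plus_Yvar_dvd_lin_prod_iff: "finite B \<Longrightarrow> (1 + Yvar a) dvd lin_prod B \<longleftrightarrow> a \<in> B"
proof
  assume "finite B" "(1 + Yvar a) dvd lin_prod B"
  then obtain c where "lin_prod B = (1 + Yvar a) * c"
    by (elim dvdE)
  then have "a \<notin> B \<Longrightarrow> lin_prod B = 0"
    by (metis poly_subst_one_lin_prod poly_subst_mult poly_subst_one_one_plus_Yvar mult_zero_left)
  with \<open>finite B\<close> show "a \<in> B"
    using lin_prod_nonzero by blast
qed (auto simp: lin_prod_def)

lemma dvd_prime_elem_mult_cases:
  fixes p :: "'a::idom"
  assumes "prime_elem p" "d dvd p * x"
  obtains d' where "d = p * d'" "d' dvd x" | "d dvd x"
proof (cases "p dvd d")
  case True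
  then obtain d' where "d = p * d'"
    by (elim dvdE)
  with assms have "d' dvd x"
    using prime_elem_not_zeroI by fastforce
  with \<open>d = p * d'\<close> show ?thesis
    using that(1) by blast
next
  case False
  obtain c where c: "p * x = d * c"
    using assms(2) by (elim dvdE)
  then have "p dvd c"
    using False assms(1) prime_elem_dvd_multD by (metis dvd_triv_left)
  then obtain c' where "c = p * c'"
    by (elim dvdE)
  with c assms(1) have "x = d * c'"
    using prime_elem_not_zeroI by (fastforce simp: mult.left_commute)
  then show ?thesis
    using that(2) by (blast intro: dvdI)
qed

lemma dvd_lin_prod_iff: "finite B \<Longrightarrow> d dvd lin_prod B \<longleftrightarrow> (\<exists>A\<subseteq>B. d = lin_prod A)"
proof
  show "finite B \<Longrightarrow> d dvd lin_prod B \<Longrightarrow> \<exists>A\<subseteq>B. d = lin_prod A"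
  proof (induction B arbitrary: d rule: finite_induct)
    case empty
    then show ?case
      by (simp add: lin_prod_def bit_poly_dvd_one_iff)
  next
    case (insert b B)
    then have "d dvd (1 + Yvar b) * lin_prod B"
      by (simp add: lin_prod_insert)
    with prime_elem_one_plus_Yvar show ?case
    proof (cases rule: dvd_prime_elem_mult_cases)
      case (1 d')
      then obtain A where A: "A \<subseteq> B" "d' = lin_prod A"
        using insert.IH by blast
      moreover have "finite A" "b \<notin> A"
        using A(1) insert.hyps finite_subset by auto
      ultimately show ?thesis
        using 1 by (intro exI[of _ "insert b A"]) (auto simp: lin_prod_insert)
    next
      case 2
      then show ?thesis
        using insert.IH by blast
    qed
  qed
qed (auto simp: lin_prod_def prod_dvd_prod_subset)

lemma lin_prod_dvd_lin_prod_iff: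
  assumes "finite A" "finite B"
  shows "lin_prod A dvd lin_prod B \<longleftrightarrow> A \<subseteq> B"
proof
  assume "lin_prod A dvd lin_prod B"
  moreover have "(1 + Yvar a) dvd lin_prod A" if "a \<in> A" for a
    using assms(1) that by (simp add: one_plus_Yvar_dvd_lin_prod_iff)
  ultimately have "(1 + Yvar a) dvd lin_prod B" if "a \<in> A" for a
    using that by (meson dvd_trans)
  then show "A \<subseteq> B"
    using assms(2) one_plus_Yvar_dvd_lin_prod_iff by blast
qed (simp add: assms lin_prod_def prod_dvd_prod_subset)

section \<open>Greatest common divisors\<close>

lemma vars_add: "vars (f + g) \<subseteq> vars f \<union> vars g"
  unfolding vars_def using keys_add[of f g] by blast

lemma vars_mult: "vars (f * g) \<subseteq> vars f \<union> vars g"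
proof
  fix k assume "k \<in> vars (f * g)"
  then obtain m where m: "m \<in> Poly_Mapping.keys (f * g)" "k \<in> Poly_Mapping.keys m"
    by (auto simp: vars_def)
  then obtain a b where "m = a + b" "a \<in> Poly_Mapping.keys f" "b \<in> Poly_Mapping.keys g"
    using keys_mult[of f g] by blast
  with m(2) show "k \<in> vars f \<union> vars g"
    using keys_add[of a b] by (auto simp: vars_def)
qed

lemma poly_in_0 [simp]: "poly_in n 0"
  by (simp add: poly_in_def vars_def)

lemma poly_in_1 [simp]: "poly_in n 1"
  by (simp add: poly_in_def vars_def)

lemma poly_in_Yvar: "i \<in> {1..n} \<Longrightarrow> poly_in n (Yvar i)"
  by (simp add: poly_in_def vars_def Yvar_def)

lemma poly_in_add: "poly_in n f \<Longrightarrow> poly_in n g \<Longrightarrow> poly_in n (f + g)"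
  unfolding poly_in_def using vars_add by blast

lemma poly_in_mult: "poly_in n f \<Longrightarrow> poly_in n g \<Longrightarrow> poly_in n (f * g)"
  unfolding poly_in_def using vars_mult by blast

lemma poly_in_prod: "(\<And>a. a \<in> A \<Longrightarrow> poly_in n (F a)) \<Longrightarrow> poly_in n (prod F A)"
  by (induction A rule: infinite_finite_induct) (simp_all add: poly_in_mult)

lemma poly_in_power: "poly_in n f \<Longrightarrow> poly_in n (f ^ k)"
  by (induction k) (simp_all add: poly_in_mult)

lemma poly_in_Ymon: "S \<subseteq> {1..n} \<Longrightarrow> poly_in n (Ymon S)"
  unfolding Ymon_def by (rule poly_in_prod) (meson poly_in_Yvar subsetD)

lemma poly_in_lin_prod: "A \<subseteq> {1..n} \<Longrightarrow> poly_in n (lin_prod A)"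
  unfolding lin_prod_def by (rule poly_in_prod) (meson poly_in_1 poly_in_add poly_in_Yvar subsetD)

lemma dvd_in_imp_dvd: "dvd_in n d f \<Longrightarrow> d dvd f"
  by (auto simp: dvd_in_def)

lemma dvd_in_lin_prod_iff:
  assumes "B \<subseteq> {1..n}"
  shows "dvd_in n d (lin_prod B) \<longleftrightarrow> (\<exists>A\<subseteq>B. d = lin_prod A)"
proof
  have "finite B"
    using assms finite_subset by blast
  then show "dvd_in n d (lin_prod B) \<Longrightarrow> \<exists>A\<subseteq>B. d = lin_prod A"
    using dvd_in_imp_dvd dvd_lin_prod_iff by blast
  show "\<exists>A\<subseteq>B. d = lin_prod A \<Longrightarrow> dvd_in n d (lin_prod B)"
  proof (elim exE conjE)
    fix A assume "A \<subseteq> B" "d = lin_prod A"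
    moreover have "lin_prod B = lin_prod A * lin_prod (B - A)"
      unfolding lin_prod_def using \<open>finite B\<close> \<open>A \<subseteq> B\<close> by (simp add: prod.subset_diff mult.commute)
    moreover have "poly_in n (lin_prod (B - A))"
      using assms by (intro poly_in_lin_prod) blast
    ultimately show "dvd_in n d (lin_prod B)"
      unfolding dvd_in_def by blast
  qed
qed

lemma dvd_in_refl: "dvd_in n f f"
  unfolding dvd_in_def by (intro exI[of _ 1]) simp

lemma is_gcd_self_iff:
  assumes "poly_in n f"
  shows "is_gcd n f f g \<longleftrightarrow> g = f"
proof
  assume gcd: "is_gcd n f f g"
  then have "dvd_in n g f" "dvd_in n f g"
    using assms dvd_in_refl unfolding is_gcd_def by blast+
  then obtain c c' where c: "f = g * c" and c': "g = f * c'"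
    unfolding dvd_in_def by blast
  show "g = f"
  proof (cases "f = 0")
    case False
    from c c' have "f * (c' * c) = f * 1"
      by (simp add: mult.assoc)
    with False have "c' * c = 1"
      by (rule mult_left_cancel[THEN iffD1])
    then have "c dvd 1"
      by (metis dvd_triv_right)
    then have "c = 1"
      by (simp add: bit_poly_dvd_one_iff)
    with c show ?thesis
      by simp
  qed (use c' in simp)
next
  assume "g = f"
  then show "is_gcd n f f g"
    using assms dvd_in_refl unfolding is_gcd_def by blast
qed

lemma is_gcd_cong_common_divisors:
  assumes "\<And>d. dvd_in n d a \<and> dvd_in n d b \<longleftrightarrow> dvd_in n d c"
  shows "is_gcd n a b g \<longleftrightarrow> is_gcd n c c g"
proof -
  have "is_gcd n a b g \<longleftrightarrow> poly_in n g \<and> (dvd_in n g a \<and> dvd_in n g b) \<and>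
      (\<forall>d. poly_in n d \<and> (dvd_in n d a \<and> dvd_in n d b) \<longrightarrow> dvd_in n d g)"
    unfolding is_gcd_def by simp
  also have "\<dots> \<longleftrightarrow> poly_in n g \<and> dvd_in n g c \<and> (\<forall>d. poly_in n d \<and> dvd_in n d c \<longrightarrow> dvd_in n d g)"
    by (simp only: assms)
  finally show ?thesis
    unfolding is_gcd_def by simp
qed

lemma common_dvd_in_lin_prod_iff:
  assumes "A \<subseteq> {1..n}" "B \<subseteq> {1..n}"
  shows "dvd_in n d (lin_prod A) \<and> dvd_in n d (lin_prod B) \<longleftrightarrow> dvd_in n d (lin_prod (A \<inter> B))"
proof
  have AB: "A \<inter> B \<subseteq> {1..n}"
    using assms by blast
  have "finite A" "finite B"
    using assms finite_subset by auto
  assume common: "dvd_in n d (lin_prod A) \<and> dvd_in n d (lin_prod B)"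
  then obtain D where D: "D \<subseteq> A" "d = lin_prod D"
    using dvd_in_lin_prod_iff[OF assms(1)] by blast
  have "lin_prod D dvd lin_prod B"
    using common D(2) dvd_in_imp_dvd by blast
  then have "D \<subseteq> B"
    using lin_prod_dvd_lin_prod_iff[OF finite_subset[OF D(1) \<open>finite A\<close>] \<open>finite B\<close>] by blast
  with D show "dvd_in n d (lin_prod (A \<inter> B))"
    by (subst dvd_in_lin_prod_iff[OF AB]) blast
next
  have AB: "A \<inter> B \<subseteq> {1..n}"
    using assms by blast
  assume "dvd_in n d (lin_prod (A \<inter> B))"
  then obtain D where D: "D \<subseteq> A \<inter> B" "d = lin_prod D"
    by (subst (asm) dvd_in_lin_prod_iff[OF AB]) blast
  have "dvd_in n d (lin_prod A)"
    using D by (subst dvd_in_lin_prod_iff[OF assms(1)]) blast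
  moreover have "dvd_in n d (lin_prod B)"
    using D by (subst dvd_in_lin_prod_iff[OF assms(2)]) blast
  ultimately show "dvd_in n d (lin_prod A) \<and> dvd_in n d (lin_prod B)" ..
qed

lemma is_gcd_lin_prod_iff:
  assumes "A \<subseteq> {1..n}" "B \<subseteq> {1..n}"
  shows "is_gcd n (lin_prod A) (lin_prod B) g \<longleftrightarrow> g = lin_prod (A \<inter> B)"
proof -
  have "is_gcd n (lin_prod A) (lin_prod B) g \<longleftrightarrow> is_gcd n (lin_prod (A \<inter> B)) (lin_prod (A \<inter> B)) g"
    by (rule is_gcd_cong_common_divisors) (rule common_dvd_in_lin_prod_iff[OF assms])
  also have "\<dots> \<longleftrightarrow> g = lin_prod (A \<inter> B)"
    using assms by (intro is_gcd_self_iff poly_in_lin_prod) blast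
  finally show ?thesis .
qed

section \<open>The Boolean ring\<close>

definition boolean_ideal :: "nat \<Rightarrow> bpoly set" where
  "boolean_ideal n =
    {\<Sum>i\<in>{1..n}. h i * (Yvar i ^ 2 - Yvar i) | h. \<forall>i\<in>{1..n}. poly_in n (h i)}"

lemma bool_eq_iff_diff_in_boolean_ideal: "bool_eq n f g \<longleftrightarrow> f - g \<in> boolean_ideal n"
  by (auto simp: bool_eq_def boolean_ideal_def)

lemma zero_in_boolean_ideal: "0 \<in> boolean_ideal n"
  unfolding boolean_ideal_def by (intro CollectI exI[of _ "\<lambda>_. 0"]) simp

lemma boolean_ideal_add:
  assumes "f \<in> boolean_ideal n" "g \<in> boolean_ideal n"
  shows "f + g \<in> boolean_ideal n"
proof -
  obtain h h' where
    h: "\<forall>i\<in>{1..n}. poly_in n (h i)" "f = (\<Sum>i\<in>{1..n}. h i * (Yvar i ^ 2 - Yvar i))" and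
    h': "\<forall>i\<in>{1..n}. poly_in n (h' i)" "g = (\<Sum>i\<in>{1..n}. h' i * (Yvar i ^ 2 - Yvar i))"
    using assms unfolding boolean_ideal_def by blast
  then show ?thesis
    unfolding boolean_ideal_def
    by (intro CollectI exI[of _ "\<lambda>i. h i + h' i"]) (simp add: poly_in_add sum.distrib distrib_right)
qed

lemma boolean_ideal_mult:
  assumes "poly_in n c" "f \<in> boolean_ideal n"
  shows "c * f \<in> boolean_ideal n"
proof -
  obtain h where h: "\<forall>i\<in>{1..n}. poly_in n (h i)" "f = (\<Sum>i\<in>{1..n}. h i * (Yvar i ^ 2 - Yvar i))"
    using assms(2) unfolding boolean_ideal_def by blast
  with assms(1) show ?thesis
    unfolding boolean_ideal_def
    by (intro CollectI exI[of _ "\<lambda>i. c * h i"]) (simp add: poly_in_mult sum_distrib_left mult.assoc)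
qed

lemma Yvar_idem_in_boolean_ideal:
  assumes "i \<in> {1..n}"
  shows "Yvar i ^ 2 - Yvar i \<in> boolean_ideal n"
proof -
  let ?h = "\<lambda>j. if j = i then 1 else 0 :: bpoly"
  have "(\<Sum>j\<in>{1..n}. ?h j * (Yvar j ^ 2 - Yvar j)) = (\<Sum>j\<in>{1..n}. if j = i then Yvar j ^ 2 - Yvar j else 0)"
    by (rule sum.cong) simp_all
  also have "\<dots> = Yvar i ^ 2 - Yvar i"
    using assms by simp
  finally show ?thesis
    unfolding boolean_ideal_def by (intro CollectI exI[of _ ?h]) auto
qed

lemma Ymon_idem_in_boolean_ideal: "S \<subseteq> {1..n} \<Longrightarrow> Ymon S ^ 2 - Ymon S \<in> boolean_ideal n"
proof (induction S rule: infinite_finite_induct)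
  case (infinite S)
  then show ?case
    by (simp add: Ymon_def zero_in_boolean_ideal)
next
  case empty
  then show ?case
    by (simp add: Ymon_def zero_in_boolean_ideal)
next
  case (insert i S)
  have "(x * y) ^ 2 - x * y = x ^ 2 * (y ^ 2 - y) + y * (x ^ 2 - x)" for x y :: bpoly
    by (simp add: algebra_simps power2_eq_square)
  moreover have "Yvar i ^ 2 * (Ymon S ^ 2 - Ymon S) + Ymon S * (Yvar i ^ 2 - Yvar i) \<in> boolean_ideal n"
    using insert by (intro boolean_ideal_add boolean_ideal_mult poly_in_power poly_in_Yvar poly_in_Ymon
        Yvar_idem_in_boolean_ideal) auto
  ultimately show ?case
    using insert.hyps by (simp add: Ymon_def)
qed

lemma bool_eq_xi_union:
  assumes "Q \<subseteq> {1..n}" "R \<subseteq> {1..n}"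
  shows "bool_eq n (xi n (Q \<union> R)) (Ymon Q * Ymon R * lin_prod ({1..n} - (Q \<union> R)))"
proof -
  define I where "I = Q \<inter> R"
  define D where "D = (Q \<union> R) - I"
  define L where "L = lin_prod ({1..n} - (Q \<union> R))"
  have "finite Q" "finite R"
    using assms finite_subset by auto
  have union: "Ymon (Q \<union> R) = Ymon D * Ymon I"
    unfolding Ymon_def D_def I_def using \<open>finite Q\<close> \<open>finite R\<close> by (intro prod.subset_diff) auto
  have "Ymon Q * Ymon R = Ymon (Q \<union> R) * Ymon I"
    unfolding Ymon_def I_def using \<open>finite Q\<close> \<open>finite R\<close> by (rule prod.union_inter[symmetric])
  then have "xi n (Q \<union> R) - Ymon Q * Ymon R * L = (Ymon D * L) * (Ymon I ^ 2 - Ymon I)"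
    using assms xi_eq_Ymon_mult_lin_prod[of "Q \<union> R" n]
    by (simp add: L_def union power2_eq_square algebra_simps poly_mapping_bit_diff_eq_add)
  moreover have "(Ymon D * L) * (Ymon I ^ 2 - Ymon I) \<in> boolean_ideal n"
    using assms unfolding D_def I_def L_def
    by (intro boolean_ideal_mult poly_in_mult poly_in_Ymon poly_in_lin_prod Ymon_idem_in_boolean_ideal) auto
  ultimately show ?thesis
    by (simp add: bool_eq_iff_diff_in_boolean_ideal L_def)
qed

theorem mainTheorem16:
  fixes n :: nat and Q R :: "nat set"
  assumes "Q \<subseteq> {1..n}" and "R \<subseteq> {1..n}"
  shows "(\<exists>\<nu>. is_gcd n (pquot (xi n Q) (TM (xi n Q))) (pquot (xi n R) (TM (xi n R))) \<nu>) \<and>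
    (\<forall>\<nu>. is_gcd n (pquot (xi n Q) (TM (xi n Q))) (pquot (xi n R) (TM (xi n R))) \<nu> \<longrightarrow>
       bool_eq n (xi n (Q \<union> R)) ((TM (xi n Q) * TM (xi n R)) * \<nu>))"
proof -
  have gcd_iff: "is_gcd n (pquot (xi n Q) (TM (xi n Q))) (pquot (xi n R) (TM (xi n R))) \<nu>
      \<longleftrightarrow> \<nu> = lin_prod ({1..n} - (Q \<union> R))" for \<nu>
    unfolding pquot_xi_TM[OF assms(1)] pquot_xi_TM[OF assms(2)] Diff_Un
    by (rule is_gcd_lin_prod_iff) auto
  show ?thesis
    unfolding gcd_iff unfolding TM_xi[OF assms(1)] TM_xi[OF assms(2)]
    using bool_eq_xi_union[OF assms] by simp
qed

end
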